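(* Let $x_1,\dots,x_r\in\mathbb R^s$, $c_1,\dots,c_r\in\{-1,1\}$, $\lambda>0$ and $\mu\in\mathbb R^r$ with $\mu>0$. Consider the primal problem $$\min_{\omega\in\mathbb R^s,\ \omega_0\in\mathbb R}\ \tfrac12\|\omega\|^2+\lambda\sum_{i=1}^r h\big(1-c_i(\langle\omega,x_i\rangle+\omega_0)\big),$$ where $h(t)=1$ if $t>0$ and $h(t)=0$ otherwise, and the dual problem $$\inf_{z\in\mathbb R^r}\ \tfrac12\Big\|\sum_{i=1}^r c_iz_ix_i\Big\|^2-\sum_{i=1}^r z_i+\sum_{i=1}^r\mu_i\mathbf 1_{\{z_i\neq0\}}\quad\text{s.t.}\quad \sum_{i=1}^r c_iz_i=0,\ z\ge0.$$ Then the primal problem always has a global minimizer, and the dual problem has a global minimizer if and only if there exist $\omega\in\mathbb R^s$, $\omega_0\in\mathbb R$ with $c_i(\langle\omega,x_i\rangle+\omega_0)\ge1$ for all $i\in[r]$.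
   Context: $\mathbf 1_{\{z_i\neq0\}}$ equals $1$ if $z_i\ne0$ and $0$ otherwise; $[r]=\{1,\dots,r\}$. *)

theory Defs
  imports "HOL-Analysis.Analysis"
begin

definition step01 :: "real \<Rightarrow> real" where
  "step01 t = (if t > 0 then 1 else 0)"

text \<open>Primal objective of the 0/1-loss SVM. Data points are indexed by a finite
  type 'r (so r = CARD('r)), and live in real^'s (so s = CARD('s)).\<close>
definition svm01_primal ::
  "('r::finite \<Rightarrow> real^'s) \<Rightarrow> ('r \<Rightarrow> real) \<Rightarrow> real \<Rightarrow> real^'s \<Rightarrow> real \<Rightarrow> real" where
  "svm01_primal x c lam w w0 =
     (1/2) * (norm w)^2 + lam * (\<Sum>i\<in>UNIV. step01 (1 - c i * (inner w (x i) + w0)))"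

definition svm01_dual ::
  "('r::finite \<Rightarrow> real^'s) \<Rightarrow> ('r \<Rightarrow> real) \<Rightarrow> real^'r \<Rightarrow> real^'r \<Rightarrow> real" where
  "svm01_dual x c mu z =
     (1/2) * (norm (\<Sum>i\<in>UNIV. (c i * z $ i) *\<^sub>R x i))^2
     - (\<Sum>i\<in>UNIV. z $ i)
     + (\<Sum>i\<in>UNIV. mu $ i * (if z $ i \<noteq> 0 then 1 else 0))"

definition svm01_dual_feasible :: "('r::finite \<Rightarrow> real) \<Rightarrow> real^'r \<Rightarrow> bool" where
  "svm01_dual_feasible c z \<longleftrightarrow> (\<Sum>i\<in>UNIV. c i * z $ i) = 0 \<and> (\<forall>i. z $ i \<ge> 0)"

end

theory Submission
  imports Defs
begin

(* Both objectives are piecewise continuous: on the closed piece where the violated margins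
   (primal) or the support of z (dual) lie in a fixed index set J, the objective is bounded by a
   continuous function, with equality when J is exactly that set. Finitely many pieces make the
   minimum over a nonempty compact set attained. The primal objective is coercive in w, and
   clamping the offset w0 to a bounded interval creates no new violations, so a minimum over a
   compact box is global. If (w, w0) separates the data, every feasible z with nonpositive dual
   value has sum z <= 2 |w|^2, which again confines the dual to a compact set. If the data are not
   separable, Gordan's alternative yields a convex combination y with sum c_i y_i = 0 and
   sum c_i y_i x_i = 0; on the ray s y the dual value is at most sum mu - s, so it is unbounded
   below. *)

lemma attains_inf_piecewise_continuous:
  fixes F :: "'a::topological_space \<Rightarrow> real"
  assumes K: "compact K" "K \<noteq> {}" and "finite I"
    and closed: "\<And>J. J \<in> I \<Longrightarrow> closed (C J)"
    and cont: "\<And>J. J \<in> I \<Longrightarrow> continuous_on (C J) (\<phi> J)"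
    and above: "\<And>J p. J \<in> I \<Longrightarrow> p \<in> K \<Longrightarrow> p \<in> C J \<Longrightarrow> F p \<le> \<phi> J p"
    and attained: "\<And>p. p \<in> K \<Longrightarrow> \<exists>J\<in>I. p \<in> C J \<and> \<phi> J p \<le> F p"
  shows "\<exists>m\<in>K. \<forall>p\<in>K. F m \<le> F p"
proof -
  define V where "V = (\<Union>J\<in>I. \<phi> J ` (K \<inter> C J))"
  have "compact V"
    unfolding V_def using K(1) \<open>finite I\<close> closed cont
    by (intro compact_UN compact_continuous_image compact_Int_closed)
       (auto intro: continuous_on_subset)
  moreover have "V \<noteq> {}"
    using K(2) attained unfolding V_def by blast
  ultimately obtain v where "v \<in> V" and v_min: "\<And>u. u \<in> V \<Longrightarrow> v \<le> u"
    by (meson compact_attains_inf)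
  then obtain J0 m where J0: "J0 \<in> I" "m \<in> K" "m \<in> C J0" and v: "v = \<phi> J0 m"
    unfolding V_def by blast
  show ?thesis
  proof (intro bexI ballI)
    fix p assume "p \<in> K"
    then obtain J where "J \<in> I" "p \<in> C J" "\<phi> J p \<le> F p"
      using attained by blast
    have "\<phi> J p \<in> V"
      unfolding V_def using \<open>J \<in> I\<close> \<open>p \<in> K\<close> \<open>p \<in> C J\<close> by blast
    have "F m \<le> v"
      using above J0 v by simp
    also have "\<dots> \<le> \<phi> J p"
      using v_min \<open>\<phi> J p \<in> V\<close> .
    also have "\<dots> \<le> F p" by fact
    finally show "F m \<le> F p" .
  qed (use J0 in simp)
qed

definition svm01_violations :: "('r \<Rightarrow> real^'s) \<Rightarrow> ('r \<Rightarrow> real) \<Rightarrow> real^'s \<Rightarrow> real \<Rightarrow> 'r set" where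
  "svm01_violations x c w w0 = {i. c i * (inner w (x i) + w0) < 1}"

lemma svm01_primal_eq_card_violations:
  "svm01_primal x c lam w w0 = (1/2) * (norm w)^2 + lam * card (svm01_violations x c w w0)"
proof -
  have "step01 (1 - t) = of_bool (t < 1)" for t
    by (simp add: step01_def)
  then show ?thesis
    by (simp add: svm01_primal_def svm01_violations_def)
qed

lemma svm01_primal_bounds:
  fixes x :: "'r::finite \<Rightarrow> real^'s"
  assumes "lam \<ge> 0"
  shows "(1/2) * (norm w)^2 \<le> svm01_primal x c lam w w0"
    and "svm01_primal x c lam w w0 \<le> (1/2) * (norm w)^2 + lam * CARD('r)"
  using assms card_mono[of UNIV "svm01_violations x c w w0"]
  by (simp_all add: svm01_primal_eq_card_violations mult_left_mono)

lemma clamp_offset_preserves_margin: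
  fixes a b M :: real
  assumes "c = -1 \<or> c = 1" and "\<bar>a\<bar> \<le> M - 1" and "c * (a + b) \<ge> 1"
  shows "c * (a + max (-M) (min M b)) \<ge> 1"
  using assms(1)
proof
  assume "c = -1"
  then show ?thesis
    using assms(2,3) by (simp add: abs_le_iff split: split_max split_min)
next
  assume "c = 1"
  then show ?thesis
    using assms(2,3) by (simp add: abs_le_iff split: split_max split_min)
qed

lemma svm01_primal_clamp_offset_le:
  fixes x :: "'r::finite \<Rightarrow> real^'s"
  assumes "\<forall>i. c i = -1 \<or> c i = 1" and "lam \<ge> 0" and "\<forall>i. \<bar>inner w (x i)\<bar> \<le> M - 1"
  shows "svm01_primal x c lam w (max (-M) (min M w0)) \<le> svm01_primal x c lam w w0"
proof -
  have "i \<notin> svm01_violations x c w (max (-M) (min M w0))"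
    if "i \<notin> svm01_violations x c w w0" for i
  proof -
    have "c i * (inner w (x i) + w0) \<ge> 1"
      using that by (simp add: svm01_violations_def not_less)
    then have "c i * (inner w (x i) + max (-M) (min M w0)) \<ge> 1"
      using assms(1,3) clamp_offset_preserves_margin by blast
    then show ?thesis
      by (simp add: svm01_violations_def not_less)
  qed
  then have "svm01_violations x c w (max (-M) (min M w0)) \<subseteq> svm01_violations x c w w0"
    by blast
  then show ?thesis
    using assms(2) by (simp add: svm01_primal_eq_card_violations card_mono mult_left_mono)
qed

lemma svm01_primal_attains_inf_on_compact:
  fixes x :: "'r::finite \<Rightarrow> real^'s"
  assumes "compact K" "K \<noteq> {}" and lam: "lam \<ge> 0"
  shows "\<exists>m\<in>K. \<forall>p\<in>K.
           svm01_primal x c lam (fst m) (snd m) \<le> svm01_primal x c lam (fst p) (snd p)"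
proof -
  define C where "C J = (\<Inter>i\<in>-J. {p. c i * (inner (fst p) (x i) + snd p) \<ge> 1})" for J :: "'r set"
  define \<phi> where "\<phi> J p = (1/2) * (norm (fst p))^2 + lam * card J"
    for J :: "'r set" and p :: "(real^'s) \<times> real"
  show ?thesis
  proof (rule attains_inf_piecewise_continuous[where I = UNIV and C = C and \<phi> = \<phi>])
    fix J :: "'r set"
    show "closed (C J)"
      unfolding C_def by (intro closed_INT ballI closed_Collect_le continuous_intros)
    show "continuous_on (C J) (\<phi> J)"
      unfolding \<phi>_def by (intro continuous_intros)
    fix p assume "p \<in> C J"
    then have "svm01_violations x c (fst p) (snd p) \<subseteq> J"
      by (force simp: C_def svm01_violations_def)
    then show "svm01_primal x c lam (fst p) (snd p) \<le> \<phi> J p"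
      using lam by (simp add: \<phi>_def svm01_primal_eq_card_violations card_mono mult_left_mono)
  next
    fix p
    show "\<exists>J\<in>UNIV. p \<in> C J \<and> \<phi> J p \<le> svm01_primal x c lam (fst p) (snd p)"
      by (rule bexI[of _ "svm01_violations x c (fst p) (snd p)"])
         (auto simp: C_def \<phi>_def svm01_violations_def svm01_primal_eq_card_violations)
  qed (use assms in simp_all)
qed

lemma svm01_primal_has_minimizer:
  fixes x :: "'r::finite \<Rightarrow> real^'s"
  assumes c: "\<forall>i. c i = -1 \<or> c i = 1" and lam: "lam \<ge> 0"
  shows "\<exists>w w0. \<forall>w' w0'. svm01_primal x c lam w w0 \<le> svm01_primal x c lam w' w0'"
proof -
  define F where "F p = svm01_primal x c lam (fst p) (snd p)" for p
  define R where "R = sqrt (2 * lam * CARD('r))"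
  define M where "M = 1 + R * (\<Sum>i\<in>UNIV. norm (x i))"
  have "R \<ge> 0" "M \<ge> 1"
    using lam by (simp_all add: R_def M_def sum_nonneg)
  define K where "K = cball (0::real^'s) R \<times> {-M..M}"
  have "compact K" "K \<noteq> {}"
    using \<open>R \<ge> 0\<close> \<open>M \<ge> 1\<close> by (auto simp: K_def intro!: compact_Times)
  then have "\<exists>m\<in>K. \<forall>p\<in>K. F m \<le> F p"
    unfolding F_def by (rule svm01_primal_attains_inf_on_compact[OF _ _ lam])
  then obtain m where "m \<in> K" and m_min: "\<And>p. p \<in> K \<Longrightarrow> F m \<le> F p"
    by blast
  have "F m \<le> svm01_primal x c lam w w0" for w w0
  proof (cases "norm w \<le> R")
    case True
    have "\<bar>inner w (x i)\<bar> \<le> M - 1" for i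
    proof -
      have "\<bar>inner w (x i)\<bar> \<le> norm w * norm (x i)"
        by (rule Cauchy_Schwarz_ineq2)
      also have "\<dots> \<le> R * (\<Sum>i\<in>UNIV. norm (x i))"
        using True \<open>R \<ge> 0\<close> by (intro mult_mono member_le_sum) auto
      finally show ?thesis by (simp add: M_def)
    qed
    then have "svm01_primal x c lam w (max (-M) (min M w0)) \<le> svm01_primal x c lam w w0"
      using c lam by (intro svm01_primal_clamp_offset_le) auto
    moreover have "(w, max (-M) (min M w0)) \<in> K"
      using True \<open>M \<ge> 1\<close> by (simp add: K_def)
    ultimately show ?thesis
      using m_min[of "(w, max (-M) (min M w0))"] by (simp add: F_def)
  next
    case False
    have "(0, 0) \<in> K"
      using \<open>R \<ge> 0\<close> \<open>M \<ge> 1\<close> by (simp add: K_def)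
    then have "F m \<le> F (0, 0)"
      by (rule m_min)
    also have "\<dots> \<le> (1/2) * (norm (0::real^'s))^2 + lam * CARD('r)"
      unfolding F_def fst_conv snd_conv by (rule svm01_primal_bounds(2)[OF lam])
    also have "\<dots> = (1/2) * R^2"
      using lam by (simp add: R_def)
    also have "\<dots> < (1/2) * (norm w)^2"
      using False \<open>R \<ge> 0\<close> by (simp add: power_strict_mono)
    also have "\<dots> \<le> svm01_primal x c lam w w0"
      by (rule svm01_primal_bounds(1)[OF lam])
    finally show ?thesis
      by simp
  qed
  then show ?thesis
    by (auto simp: F_def)
qed

lemma svm01_dual_eq_support_sum:
  "svm01_dual x c mu z = (1/2) * (norm (\<Sum>i\<in>UNIV. (c i * z $ i) *\<^sub>R x i))^2
     - (\<Sum>i\<in>UNIV. z $ i) + (\<Sum>i | z $ i \<noteq> 0. mu $ i)"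
proof -
  have "(if P then 1 else 0) = (of_bool P :: real)" for P
    by simp
  then show ?thesis
    by (simp add: svm01_dual_def)
qed

lemma svm01_dual_feasible_sum_le_inner:
  fixes x :: "'r::finite \<Rightarrow> real^'s"
  assumes "svm01_dual_feasible c z" and sep: "\<forall>i. c i * (inner w (x i) + w0) \<ge> 1"
  shows "(\<Sum>i\<in>UNIV. z $ i) \<le> inner w (\<Sum>i\<in>UNIV. (c i * z $ i) *\<^sub>R x i)"
proof -
  have z_nonneg: "\<And>i. 0 \<le> z $ i" and balanced: "(\<Sum>i\<in>UNIV. c i * z $ i) = 0"
    using assms(1) unfolding svm01_dual_feasible_def by auto
  have "(\<Sum>i\<in>UNIV. z $ i) \<le> (\<Sum>i\<in>UNIV. z $ i * (c i * (inner w (x i) + w0)))"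
    using sep z_nonneg by (intro sum_mono) (metis mult.right_neutral mult_left_mono)
  also have "\<dots> = (\<Sum>i\<in>UNIV. (c i * z $ i) * inner w (x i)) + w0 * (\<Sum>i\<in>UNIV. c i * z $ i)"
    by (simp add: sum_distrib_left sum.distrib algebra_simps)
  also have "\<dots> = inner w (\<Sum>i\<in>UNIV. (c i * z $ i) *\<^sub>R x i)"
    using balanced by (simp add: inner_sum_right)
  finally show ?thesis .
qed

lemma svm01_dual_nonpos_imp_sum_le:
  fixes x :: "'r::finite \<Rightarrow> real^'s"
  assumes mu: "\<forall>i. mu $ i \<ge> 0" and "svm01_dual_feasible c z"
    and sep: "\<forall>i. c i * (inner w (x i) + w0) \<ge> 1" and "svm01_dual x c mu z \<le> 0"
  shows "(\<Sum>i\<in>UNIV. z $ i) \<le> 2 * (norm w)^2"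
proof -
  define v where "v = (\<Sum>i\<in>UNIV. (c i * z $ i) *\<^sub>R x i)"
  have sum_le: "(\<Sum>i\<in>UNIV. z $ i) \<le> norm w * norm v"
    using svm01_dual_feasible_sum_le_inner[OF assms(2) sep] norm_cauchy_schwarz[of w v]
    unfolding v_def by linarith
  have "(\<Sum>i | z $ i \<noteq> 0. mu $ i) \<ge> 0"
    using mu by (simp add: sum_nonneg)
  then have "(1/2) * (norm v)^2 \<le> (\<Sum>i\<in>UNIV. z $ i)"
    using assms(4) by (simp add: svm01_dual_eq_support_sum v_def)
  then have sq_le: "norm v * norm v \<le> (2 * norm w) * norm v"
    using sum_le unfolding power2_eq_square by linarith
  have "norm v \<le> 2 * norm w"
  proof (cases "norm v = 0")
    case False
    then show ?thesis
      using mult_right_le_imp_le[OF sq_le] by simp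
  qed simp
  then have "norm w * norm v \<le> 2 * (norm w)^2"
    using mult_left_mono[of "norm v" "2 * norm w" "norm w"] by (simp add: power2_eq_square)
  with sum_le show ?thesis
    by linarith
qed

lemma svm01_dual_attains_inf_on_compact:
  fixes x :: "'r::finite \<Rightarrow> real^'s"
  assumes "compact K" "K \<noteq> {}" and mu: "\<forall>i. mu $ i \<ge> 0"
  shows "\<exists>m\<in>K. \<forall>z\<in>K. svm01_dual x c mu m \<le> svm01_dual x c mu z"
proof -
  define C where "C J = (\<Inter>i\<in>-J. {z::real^'r. z $ i = 0})" for J :: "'r set"
  define \<phi> where "\<phi> J z = (1/2) * (norm (\<Sum>i\<in>UNIV. (c i * z $ i) *\<^sub>R x i))^2
      - (\<Sum>i\<in>UNIV. z $ i) + (\<Sum>i\<in>J. mu $ i)" for J :: "'r set" and z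
  show ?thesis
  proof (rule attains_inf_piecewise_continuous[where I = UNIV and C = C and \<phi> = \<phi>])
    fix J :: "'r set"
    show "closed (C J)"
      unfolding C_def by (intro closed_INT ballI closed_Collect_eq continuous_intros)
    show "continuous_on (C J) (\<phi> J)"
      unfolding \<phi>_def by (intro continuous_intros)
    fix z assume "z \<in> C J"
    then have "{i. z $ i \<noteq> 0} \<subseteq> J"
      by (auto simp: C_def)
    then show "svm01_dual x c mu z \<le> \<phi> J z"
      using mu by (simp add: \<phi>_def svm01_dual_eq_support_sum sum_mono2)
  next
    fix z
    show "\<exists>J\<in>UNIV. z \<in> C J \<and> \<phi> J z \<le> svm01_dual x c mu z"
      by (rule bexI[of _ "{i. z $ i \<noteq> 0}"]) (auto simp: C_def \<phi>_def svm01_dual_eq_support_sum)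
  qed (use assms in simp_all)
qed

lemma svm01_dual_has_minimizer_if_separable:
  fixes x :: "'r::finite \<Rightarrow> real^'s"
  assumes mu: "\<forall>i. mu $ i \<ge> 0" and sep: "\<forall>i. c i * (inner w (x i) + w0) \<ge> 1"
  shows "\<exists>z. svm01_dual_feasible c z \<and>
              (\<forall>z'. svm01_dual_feasible c z' \<longrightarrow> svm01_dual x c mu z \<le> svm01_dual x c mu z')"
proof -
  define F where "F = svm01_dual x c mu"
  define B where "B = 2 * (norm w)^2"
  define K where "K = cbox 0 (\<chi> i. B) \<inter> {z::real^'r. (\<Sum>i\<in>UNIV. c i * z $ i) = 0}"
  have K_iff: "z \<in> K \<longleftrightarrow> svm01_dual_feasible c z \<and> (\<forall>i. z $ i \<le> B)" for z
    unfolding K_def svm01_dual_feasible_def by (auto simp: mem_box_cart)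
  have "0 \<in> K"
    by (simp add: K_iff svm01_dual_feasible_def B_def)
  have "compact K"
    unfolding K_def by (intro compact_Int_closed compact_cbox closed_Collect_eq continuous_intros)
  moreover have "K \<noteq> {}"
    using \<open>0 \<in> K\<close> by blast
  ultimately have "\<exists>m\<in>K. \<forall>z\<in>K. F m \<le> F z"
    unfolding F_def by (rule svm01_dual_attains_inf_on_compact[OF _ _ mu])
  then obtain m where "m \<in> K" and m_min: "\<And>z. z \<in> K \<Longrightarrow> F m \<le> F z"
    by blast
  have "F m \<le> F z" if feasible: "svm01_dual_feasible c z" for z
  proof (cases "z \<in> K")
    case True
    then show ?thesis
      by (rule m_min)
  next
    case False
    then obtain j where "z $ j > B"
      using feasible by (auto simp: K_iff not_le)
    moreover have "z $ j \<le> (\<Sum>i\<in>UNIV. z $ i)"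
      using feasible by (intro member_le_sum) (auto simp: svm01_dual_feasible_def)
    ultimately have "\<not> svm01_dual x c mu z \<le> 0"
      using svm01_dual_nonpos_imp_sum_le[OF mu feasible sep] unfolding B_def by linarith
    moreover have "F m \<le> F 0"
      using m_min \<open>0 \<in> K\<close> .
    ultimately show ?thesis
      by (simp add: F_def svm01_dual_def)
  qed
  then show ?thesis
    using \<open>m \<in> K\<close> by (auto simp: K_iff F_def)
qed

lemma gordan_alternative:
  fixes g :: "'i::finite \<Rightarrow> 'a::euclidean_space"
  assumes "\<nexists>u. \<forall>i. inner u (g i) > 0"
  shows "\<exists>y. (\<forall>i. 0 \<le> y i) \<and> sum y UNIV = 1 \<and> (\<Sum>i\<in>UNIV. y i *\<^sub>R g i) = 0"
proof -
  define T where "T = {(\<Sum>i\<in>UNIV. y i *\<^sub>R g i) | y. (\<forall>i. 0 \<le> y i) \<and> sum y UNIV = 1}"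
  have "g j \<in> T" for j
  proof -
    have "(\<Sum>i\<in>UNIV. of_bool (i = j) *\<^sub>R g i) = (\<Sum>i\<in>UNIV. if i = j then g i else 0)"
      by (intro sum.cong) auto
    then have "(\<Sum>i\<in>UNIV. of_bool (i = j) *\<^sub>R g i) = g j"
      by simp
    then show ?thesis
      unfolding T_def by (intro CollectI exI[of _ "\<lambda>i. of_bool (i = j)"]) simp
  qed
  moreover have "convex T"
  proof (rule convexI)
    fix q1 q2 and u v :: real
    assume "q1 \<in> T" "q2 \<in> T" and uv: "0 \<le> u" "0 \<le> v" "u + v = 1"
    then obtain y1 y2 where
      y1: "\<forall>i. 0 \<le> y1 i" "sum y1 UNIV = 1" "q1 = (\<Sum>i\<in>UNIV. y1 i *\<^sub>R g i)" and
      y2: "\<forall>i. 0 \<le> y2 i" "sum y2 UNIV = 1" "q2 = (\<Sum>i\<in>UNIV. y2 i *\<^sub>R g i)"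
      unfolding T_def by blast
    show "u *\<^sub>R q1 + v *\<^sub>R q2 \<in> T"
      unfolding T_def
      by (intro CollectI exI[of _ "\<lambda>i. u * y1 i + v * y2 i"])
         (use y1 y2 uv in \<open>auto simp: sum.distrib sum_distrib_left[symmetric]
            scaleR_sum_right scaleR_add_left\<close>)
  qed
  ultimately have hull_T: "convex hull (range g) \<subseteq> T"
    by (intro hull_minimal) auto
  have "0 \<in> convex hull (range g)"
  proof (rule ccontr)
    assume "0 \<notin> convex hull (range g)"
    moreover have "closed (convex hull (range g))"
      by (intro compact_imp_closed compact_convex_hull finite_imp_compact) simp
    ultimately obtain a b where "0 < b" and "\<forall>q\<in>convex hull (range g). inner a q > b"
      using separating_hyperplane_closed_0 convex_convex_hull by blast
    then have "\<forall>i. inner a (g i) > 0"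
      by (metis hull_inc order.strict_trans rangeI)
    with assms show False
      by blast
  qed
  with hull_T have "0 \<in> T"
    by blast
  then show ?thesis
    unfolding T_def by (auto dest: sym)
qed

lemma not_separable_imp_balanced_combination:
  fixes x :: "'r::finite \<Rightarrow> real^'s"
  assumes "\<nexists>w w0. \<forall>i. c i * (inner w (x i) + w0) \<ge> 1"
  shows "\<exists>y. (\<forall>i. 0 \<le> y i) \<and> sum y UNIV = 1 \<and> (\<Sum>i\<in>UNIV. c i * y i) = 0
            \<and> (\<Sum>i\<in>UNIV. (c i * y i) *\<^sub>R x i) = 0"
proof -
  define g where "g i = (c i *\<^sub>R x i, c i)" for i
  have "\<nexists>u. \<forall>i. inner u (g i) > 0"
  proof
    assume "\<exists>u. \<forall>i. inner u (g i) > 0"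
    then obtain w w0 where pos: "\<forall>i. c i * (inner w (x i) + w0) > 0"
      by (force simp: g_def algebra_simps)
    define \<delta> where "\<delta> = Min (range (\<lambda>i. c i * (inner w (x i) + w0)))"
    have "\<delta> > 0"
      using pos by (simp add: \<delta>_def)
    have "c i * (inner (w /\<^sub>R \<delta>) (x i) + w0 / \<delta>) \<ge> 1" for i
    proof -
      have "\<delta> \<le> c i * (inner w (x i) + w0)"
        by (simp add: \<delta>_def)
      then show ?thesis
        using \<open>\<delta> > 0\<close> by (simp add: field_simps)
    qed
    with assms show False
      by blast
  qed
  then obtain y where "\<forall>i. 0 \<le> y i" "sum y UNIV = 1" and combination: "(\<Sum>i\<in>UNIV. y i *\<^sub>R g i) = 0"
    using gordan_alternative by blast
  moreover have "(\<Sum>i\<in>UNIV. y i *\<^sub>R g i) = ((\<Sum>i\<in>UNIV. (c i * y i) *\<^sub>R x i), (\<Sum>i\<in>UNIV. c i * y i))"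
    by (simp add: g_def prod_eq_iff fst_sum snd_sum mult.commute)
  ultimately show ?thesis
    by (auto simp: zero_prod_def)
qed

lemma svm01_dual_unbounded_below_if_not_separable:
  fixes x :: "'r::finite \<Rightarrow> real^'s"
  assumes mu: "\<forall>i. mu $ i \<ge> 0" and "\<nexists>w w0. \<forall>i. c i * (inner w (x i) + w0) \<ge> 1"
  shows "\<exists>z. svm01_dual_feasible c z \<and> svm01_dual x c mu z < b"
proof -
  obtain y where y: "\<forall>i. 0 \<le> y i" "sum y UNIV = 1" "(\<Sum>i\<in>UNIV. c i * y i) = 0"
      "(\<Sum>i\<in>UNIV. (c i * y i) *\<^sub>R x i) = 0"
    using not_separable_imp_balanced_combination[OF assms(2)] by blast
  define s where "s = \<bar>(\<Sum>i\<in>UNIV. mu $ i) - b\<bar> + 1"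
  define z where "z = (\<chi> i. s * y i)"
  have "s > 0"
    by (simp add: s_def add_nonneg_pos)
  have "svm01_dual_feasible c z"
    using y \<open>s > 0\<close> by (simp add: svm01_dual_feasible_def z_def sum_distrib_left[symmetric] algebra_simps)
  moreover have "svm01_dual x c mu z < b"
  proof -
    have "(\<Sum>i\<in>UNIV. (c i * z $ i) *\<^sub>R x i) = s *\<^sub>R (\<Sum>i\<in>UNIV. (c i * y i) *\<^sub>R x i)"
      by (simp add: z_def scaleR_sum_right algebra_simps)
    moreover have "(\<Sum>i\<in>UNIV. z $ i) = s"
      using y(2) by (simp add: z_def sum_distrib_left[symmetric])
    moreover have "(\<Sum>i | z $ i \<noteq> 0. mu $ i) \<le> (\<Sum>i\<in>UNIV. mu $ i)"
      using mu by (intro sum_mono2) auto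
    ultimately show ?thesis
      using y(4) by (simp add: svm01_dual_eq_support_sum s_def)
  qed
  ultimately show ?thesis
    by blast
qed

theorem mainTheorem8:
  fixes x :: "'r::finite \<Rightarrow> real^'s"
    and c :: "'r \<Rightarrow> real"
    and lam :: real
    and mu :: "real^'r"
  assumes "\<forall>i. c i = -1 \<or> c i = 1"
    and "lam > 0"
    and "\<forall>i. mu $ i > 0"
  shows "(\<exists>w w0. \<forall>w' w0'. svm01_primal x c lam w w0 \<le> svm01_primal x c lam w' w0')
       \<and> ((\<exists>z. svm01_dual_feasible c z \<and>
              (\<forall>z'. svm01_dual_feasible c z' \<longrightarrow> svm01_dual x c mu z \<le> svm01_dual x c mu z'))
          \<longleftrightarrow> (\<exists>w w0. \<forall>i. c i * (inner w (x i) + w0) \<ge> 1))"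
proof (intro conjI iffI)
  have mu: "\<forall>i. mu $ i \<ge> 0"
    using assms(3) by (simp add: less_imp_le)
  show "\<exists>w w0. \<forall>w' w0'. svm01_primal x c lam w w0 \<le> svm01_primal x c lam w' w0'"
    using assms(2) by (intro svm01_primal_has_minimizer[OF assms(1)]) simp
  show "\<exists>z. svm01_dual_feasible c z \<and>
          (\<forall>z'. svm01_dual_feasible c z' \<longrightarrow> svm01_dual x c mu z \<le> svm01_dual x c mu z')"
    if "\<exists>w w0. \<forall>i. c i * (inner w (x i) + w0) \<ge> 1"
    using that svm01_dual_has_minimizer_if_separable[OF mu] by blast
  show "\<exists>w w0. \<forall>i. c i * (inner w (x i) + w0) \<ge> 1"
    if dual_min: "\<exists>z. svm01_dual_feasible c z \<and>
          (\<forall>z'. svm01_dual_feasible c z' \<longrightarrow> svm01_dual x c mu z \<le> svm01_dual x c mu z')"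
  proof (rule ccontr)
    assume "\<not> (\<exists>w w0. \<forall>i. c i * (inner w (x i) + w0) \<ge> 1)"
    moreover obtain z where "\<forall>z'. svm01_dual_feasible c z' \<longrightarrow> svm01_dual x c mu z \<le> svm01_dual x c mu z'"
      using dual_min by blast
    ultimately show False
      using svm01_dual_unbounded_below_if_not_separable[OF mu, of c x "svm01_dual x c mu z"]
      by (auto simp: not_less)
  qed
qed

end
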